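(* Let $h\in\mathbb{Z}$ and $n\ge0$. The number of partitions $\lambda\vdash n$ having an $h$-fixed hook arising from a part of size $1$ equals the number of partitions of $n-h$ that have at least $1-h$ parts and in which the part $1$ occurs exactly once (this number being $0$ if $n-h<0$). Equivalently, the generating function of the former is $$q^{h+1}\left(\frac{1}{(q^2;q)_\infty}-\sum_{m=0}^{-h-1}\frac{q^{2m}}{(q;q)_m}\right),$$ where the finite sum is empty for $h\ge0$.
   Context: A partition $\lambda=(\lambda_1\ge\cdots\ge\lambda_t>0)$ of $n$ has first-column hook lengths $h_{s,1}(\lambda)=\lambda_s+(t-s)$. An $h$-fixed hook arising from a part of size $k$ is an index $s$ with $h_{s,1}(\lambda)=s+h$ and $\lambda_s=k$. Notation: $(a;q)_\infty=\prod_{j\ge0}(1-aq^j)$, $(q;q)_m=\prod_{j=1}^m(1-q^j)$. *)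

theory Defs
  imports Main
begin

text \<open>A partition of n is represented as a weakly decreasing list of positive
  naturals (lambda_1 >= ... >= lambda_t > 0) summing to n. Index s ranges over 1..t,
  and lambda_s = xs ! (s - 1).\<close>

definition is_partition :: "nat list \<Rightarrow> nat \<Rightarrow> bool" where
  "is_partition xs n \<longleftrightarrow> sorted_wrt (\<ge>) xs \<and> (\<forall>x\<in>set xs. 0 < x) \<and> sum_list xs = n"

definition first_col_hook :: "nat list \<Rightarrow> nat \<Rightarrow> nat" where
  "first_col_hook xs s = xs ! (s - 1) + (length xs - s)"

definition has_fixed_hook_from_part :: "int \<Rightarrow> nat \<Rightarrow> nat list \<Rightarrow> bool" where
  "has_fixed_hook_from_part h k xs \<longleftrightarrow>
     (\<exists>s\<in>{1..length xs}. int (first_col_hook xs s) = int s + h \<and> xs ! (s - 1) = k)"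

end

theory Submission
  imports Defs
begin

text \<open>Write a partition as \<open>\<mu> 1\<^sup>m\<close> with all parts of \<open>\<mu>\<close> at least 2. The first-column
  hook of the \<open>(j+1)\<close>-st part 1 is \<open>h\<close>-fixed iff \<open>m = \<ell>(\<mu>) + h + 1 + 2j\<close>, where
  \<open>j \<ge> 0\<close> and \<open>j + \<ell>(\<mu>) + h \<ge> 0\<close>. The pair \<open>(\<mu>, j)\<close> also encodes the partition
  \<open>(\<mu> + 1) 2\<^sup>j 1\<close> of \<open>n - h\<close>, obtained by adding 1 to every part of \<open>\<mu>\<close>: it has exactly one
  part 1 and \<open>\<ell>(\<mu>) + j + 1 \<ge> 1 - h\<close> parts, and every such partition arises from exactly one
  pair. Both sides are therefore counted by the same set of pairs.\<close>

lemma sorted_desc_eq_filter_greater_append_replicate: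
  fixes xs :: "'a::linorder list"
  assumes "sorted_wrt (\<ge>) xs" and "\<forall>x\<in>set xs. k \<le> x"
  shows "xs = filter ((<) k) xs @ replicate (count_list xs k) k"
  using assms
proof (induction xs)
  case Nil
  then show ?case by simp
next
  case (Cons x xs)
  show ?case
  proof (cases "k < x")
    case True
    then show ?thesis using Cons by auto
  next
    case False
    then have all_k: "\<forall>y\<in>set (x # xs). y = k"
      using Cons.prems by (fastforce intro: order.antisym)
    then have "x # xs = replicate (length (x # xs)) k"
      by (metis replicate_length_same)
    then show ?thesis
      using all_k by (simp add: count_list_eq_length_filter)
  qed
qed

lemma sorted_wrt_replicate: "R x x \<Longrightarrow> sorted_wrt R (replicate n x)"
  by (induction n) auto

lemma is_partition_append_replicate_one:
  assumes "\<forall>x\<in>set mu. 1 < x"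
  shows "is_partition (mu @ replicate m 1) n \<longleftrightarrow> sorted_wrt (\<ge>) mu \<and> sum_list mu + m = n"
  using assms sorted_wrt_replicate[of "(\<ge>)" "1::nat" m]
  by (auto simp: is_partition_def sorted_wrt_append sum_list_replicate)

lemma is_partition_map_Suc_twos_one:
  assumes "\<forall>x\<in>set mu. 0 < x"
  shows "is_partition (map Suc mu @ replicate j 2 @ [1]) n \<longleftrightarrow>
     sorted_wrt (\<ge>) mu \<and> sum_list mu + length mu + 2 * j + 1 = n"
proof -
  have "sorted_wrt (\<ge>) (map Suc mu @ replicate j 2 @ [1]) \<longleftrightarrow> sorted_wrt (\<ge>) mu"
    using assms sorted_wrt_replicate[of "(\<ge>)" "2::nat" j]
    by (simp add: sorted_wrt_append sorted_wrt_map Suc_leI)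
  moreover have "sum_list (map Suc mu @ replicate j 2 @ [1]) = sum_list mu + length mu + 2 * j + 1"
    using sum_list_Suc[of id mu] by (simp add: sum_list_replicate)
  ultimately show ?thesis
    by (auto simp: is_partition_def)
qed

lemma has_fixed_hook_from_one_iff:
  fixes mu :: "nat list"
  assumes "\<forall>x\<in>set mu. 1 < x"
  shows "has_fixed_hook_from_part h 1 (mu @ replicate m 1) \<longleftrightarrow>
     (\<exists>j. int m = int (length mu) + h + 1 + 2 * int j \<and> 0 \<le> int j + int (length mu) + h)"
    (is "?hook \<longleftrightarrow> (\<exists>j. ?fixed j)")
proof
  assume ?hook
  then obtain s where s: "1 \<le> s" "s \<le> length mu + m"
    and hook: "int (first_col_hook (mu @ replicate m 1) s) = int s + h"
    and one: "(mu @ replicate m 1) ! (s - 1) = 1"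
    unfolding has_fixed_hook_from_part_def by auto
  have "length mu < s"
  proof (rule ccontr)
    assume "\<not> length mu < s"
    then have "s - 1 < length mu" using s by simp
    then have "mu ! (s - 1) = 1" using one by (simp add: nth_append)
    with \<open>s - 1 < length mu\<close> show False using assms nth_mem by fastforce
  qed
  then have "?fixed (s - length mu - 1)"
    using hook one s unfolding first_col_hook_def by simp
  then show "\<exists>j. ?fixed j" ..
next
  assume "\<exists>j. ?fixed j"
  then obtain j where j: "?fixed j" ..
  define s where "s = length mu + j + 1"
  have "j < m" using j by linarith
  then have "(mu @ replicate m 1) ! (s - 1) = 1" and "s \<in> {1..length mu + m}"
    unfolding s_def by (auto simp: nth_append)
  moreover have "int (first_col_hook (mu @ replicate m 1) s) = int s + h"
    using j \<open>j < m\<close> unfolding first_col_hook_def s_def by (simp add: nth_append)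
  ultimately show ?hook
    unfolding has_fixed_hook_from_part_def by auto
qed

text \<open>\<open>mu\<close> is the list of parts greater than 1 and \<open>j\<close> the number of parts 1 preceding the
  one carrying the fixed hook.\<close>

definition hook_data :: "int \<Rightarrow> nat \<Rightarrow> (nat list \<times> nat) set" where
  "hook_data h n = {(mu, j). sorted_wrt (\<ge>) mu \<and> (\<forall>x\<in>set mu. 1 < x) \<and>
     0 \<le> int j + int (length mu) + h \<and>
     int (sum_list mu) + int (length mu) + h + 1 + 2 * int j = int n}"

definition hook_partition :: "int \<Rightarrow> nat list \<times> nat \<Rightarrow> nat list" where
  "hook_partition h = (\<lambda>(mu, j). mu @ replicate (nat (int (length mu) + h + 1 + 2 * int j)) 1)"

definition single_one_partition :: "nat list \<times> nat \<Rightarrow> nat list" where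
  "single_one_partition = (\<lambda>(mu, j). map Suc mu @ replicate j 2 @ [1])"

lemma partition_eq_filter_greater_one_append_ones:
  assumes "is_partition xs n"
  shows "xs = filter ((<) 1) xs @ replicate (count_list xs 1) 1"
  using assms sorted_desc_eq_filter_greater_append_replicate[of xs 1]
  by (simp add: is_partition_def Suc_le_eq)

lemma fixed_hook_partitions_eq_image:
  "{xs. is_partition xs n \<and> has_fixed_hook_from_part h 1 xs} = hook_partition h ` hook_data h n"
proof (intro equalityI subsetI)
  fix xs
  assume "xs \<in> {xs. is_partition xs n \<and> has_fixed_hook_from_part h 1 xs}"
  then have part: "is_partition xs n" and hook: "has_fixed_hook_from_part h 1 xs" by auto
  define mu where "mu = filter ((<) 1) xs"
  define m where "m = count_list xs 1"
  have xs: "xs = mu @ replicate m 1" and large: "\<forall>x\<in>set mu. 1 < x"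
    using partition_eq_filter_greater_one_append_ones[OF part] unfolding mu_def m_def by auto
  obtain j where j: "int m = int (length mu) + h + 1 + 2 * int j" "0 \<le> int j + int (length mu) + h"
    using hook has_fixed_hook_from_one_iff[OF large] xs by auto
  have "(mu, j) \<in> hook_data h n"
    using part j large is_partition_append_replicate_one[OF large] xs
    unfolding hook_data_def by auto
  moreover have "hook_partition h (mu, j) = xs"
    unfolding hook_partition_def using xs j(1) by (metis case_prod_conv nat_int)
  ultimately show "xs \<in> hook_partition h ` hook_data h n" by force
next
  fix xs
  assume "xs \<in> hook_partition h ` hook_data h n"
  then obtain mu j where data: "(mu, j) \<in> hook_data h n" and xs: "xs = hook_partition h (mu, j)"
    by auto
  define m where "m = nat (int (length mu) + h + 1 + 2 * int j)"
  have large: "\<forall>x\<in>set mu. 1 < x" and m: "int m = int (length mu) + h + 1 + 2 * int j"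
    using data unfolding hook_data_def m_def by auto
  have "xs = mu @ replicate m 1"
    unfolding xs hook_partition_def m_def by simp
  moreover have "is_partition (mu @ replicate m 1) n"
    using data m is_partition_append_replicate_one[OF large] unfolding hook_data_def by auto
  moreover have "has_fixed_hook_from_part h 1 (mu @ replicate m 1)"
    using data m has_fixed_hook_from_one_iff[OF large] unfolding hook_data_def by auto
  ultimately show "xs \<in> {xs. is_partition xs n \<and> has_fixed_hook_from_part h 1 xs}" by simp
qed

lemma inj_on_hook_partition:
  "inj_on (hook_partition h) {(mu, j). (\<forall>x\<in>set mu. 1 < x) \<and> 0 \<le> int (length mu) + h + 1 + 2 * int j}"
proof (intro inj_onI, clarify)
  fix mu j nu i
  assume mu: "\<forall>x\<in>set mu. 1 < x" "0 \<le> int (length mu) + h + 1 + 2 * int j"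
    and nu: "\<forall>x\<in>set nu. 1 < x" "0 \<le> int (length nu) + h + 1 + 2 * int i"
    and eq: "hook_partition h (mu, j) = hook_partition h (nu, i)"
  have "filter ((<) 1) (hook_partition h (mu, j)) = mu"
    and "filter ((<) 1) (hook_partition h (nu, i)) = nu"
    using mu nu by (simp_all add: hook_partition_def)
  then have "mu = nu" using eq by simp
  moreover have "length (hook_partition h (mu, j)) = length (hook_partition h (nu, i))"
    using eq by simp
  ultimately show "mu = nu \<and> j = i"
    using mu nu by (simp add: hook_partition_def)
qed

lemma inj_on_single_one_partition:
  "inj_on single_one_partition {(mu, j). \<forall>x\<in>set mu. 1 < x}"
proof (rule inj_on_inverseI)
  fix p :: "nat list \<times> nat"
  assume "p \<in> {(mu, j). \<forall>x\<in>set mu. 1 < x}"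
  then obtain mu j where p: "p = (mu, j)" and large: "\<forall>x\<in>set mu. 1 < x" by auto
  have "count_list (replicate j x) x = j" for x :: nat
    by (induction j) auto
  moreover have "2 \<notin> set (map Suc mu)"
    using large by auto
  ultimately have "count_list (single_one_partition p) 2 = j"
    by (simp add: p single_one_partition_def del: set_map)
  moreover have "filter ((<) 2) (single_one_partition p) = map Suc mu"
    using large by (simp add: p single_one_partition_def filter_True)
  ultimately show "(map (\<lambda>x. x - 1) (filter ((<) 2) (single_one_partition p)),
        count_list (single_one_partition p) 2) = p"
    by (simp add: p o_def)
qed

lemma partition_with_single_one_eq:
  assumes "is_partition ys n" and "count_list ys 1 = 1"
  shows "ys = map Suc (map (\<lambda>x. x - 1) (filter ((<) 2) ys)) @ replicate (count_list ys 2) 2 @ [1]"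
proof -
  define zs where "zs = filter ((<) 1) ys"
  have ys: "ys = zs @ [1]"
    using partition_eq_filter_greater_one_append_ones[OF assms(1), unfolded assms(2), folded zs_def]
    by simp
  have "sorted_wrt (\<ge>) zs"
    using assms(1) unfolding zs_def is_partition_def by (simp add: sorted_wrt_filter)
  then have zs_split: "zs = filter ((<) 2) zs @ replicate (count_list zs 2) 2"
    by (rule sorted_desc_eq_filter_greater_append_replicate) (auto simp: zs_def)
  have "filter ((<) 2) zs = filter ((<) 2) ys"
    unfolding zs_def by (auto intro: filter_cong)
  moreover have "count_list zs 2 = count_list ys 2"
    by (subst ys) simp
  ultimately have zs: "zs = filter ((<) 2) ys @ replicate (count_list ys 2) 2"
    using zs_split by metis
  have "map Suc (map (\<lambda>x. x - 1) (filter ((<) 2) ys)) = filter ((<) 2) ys"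
    by (auto intro: map_idI)
  with ys zs show ?thesis
    by simp
qed

lemma single_one_partitions_eq_image:
  "{ys. is_partition ys (nat (int n - h)) \<and> int (length ys) \<ge> 1 - h \<and> count_list ys 1 = 1} =
     single_one_partition ` hook_data h n"
proof (intro equalityI subsetI)
  fix ys
  assume "ys \<in> {ys. is_partition ys (nat (int n - h)) \<and> int (length ys) \<ge> 1 - h \<and> count_list ys 1 = 1}"
  then have part: "is_partition ys (nat (int n - h))" and len: "int (length ys) \<ge> 1 - h"
    and one: "count_list ys 1 = 1" by auto
  define mu where "mu = map (\<lambda>x. x - 1) (filter ((<) 2) ys)"
  define j where "j = count_list ys 2"
  have ys: "ys = map Suc mu @ replicate j 2 @ [1]"
    using partition_with_single_one_eq[OF part one] unfolding mu_def j_def .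
  have large: "\<forall>x\<in>set mu. 1 < x"
    unfolding mu_def by auto
  then have pos: "\<forall>x\<in>set mu. 0 < x"
    by auto
  have "sorted_wrt (\<ge>) mu" and "sum_list mu + length mu + 2 * j + 1 = nat (int n - h)"
    using part is_partition_map_Suc_twos_one[OF pos] unfolding ys by auto
  moreover have "length ys = length mu + j + 1"
    unfolding ys by simp
  ultimately have "(mu, j) \<in> hook_data h n"
    using large len unfolding hook_data_def by auto
  moreover have "single_one_partition (mu, j) = ys"
    unfolding single_one_partition_def ys by simp
  ultimately show "ys \<in> single_one_partition ` hook_data h n" by force
next
  fix ys
  assume "ys \<in> single_one_partition ` hook_data h n"
  then obtain mu j where data: "(mu, j) \<in> hook_data h n" and ys: "ys = map Suc mu @ replicate j 2 @ [1]"
    by (auto simp: single_one_partition_def)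
  have large: "\<forall>x\<in>set mu. 1 < x"
    using data unfolding hook_data_def by auto
  then have pos: "\<forall>x\<in>set mu. 0 < x"
    by auto
  have "is_partition ys (nat (int n - h))"
    using data is_partition_map_Suc_twos_one[OF pos] unfolding ys hook_data_def by auto
  moreover have "int (length ys) \<ge> 1 - h"
    using data unfolding ys hook_data_def by auto
  moreover have "1 \<notin> set (map Suc mu)"
    using large by auto
  then have "count_list ys 1 = 1"
    unfolding ys by (simp del: set_map)
  ultimately show "ys \<in> {ys. is_partition ys (nat (int n - h)) \<and> int (length ys) \<ge> 1 - h \<and> count_list ys 1 = 1}"
    by simp
qed

theorem theorem3p3:
  fixes h :: int and n :: nat
  shows "card {xs. is_partition xs n \<and> has_fixed_hook_from_part h 1 xs} =
    (if int n - h < 0 then 0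
     else card {xs. is_partition xs (nat (int n - h)) \<and> int (length xs) \<ge> 1 - h
                    \<and> count_list xs 1 = 1})"
proof -
  have "card {xs. is_partition xs n \<and> has_fixed_hook_from_part h 1 xs} = card (hook_data h n)"
    unfolding fixed_hook_partitions_eq_image
    by (rule card_image, rule inj_on_subset[OF inj_on_hook_partition]) (auto simp: hook_data_def)
  moreover have "card {xs. is_partition xs (nat (int n - h)) \<and> int (length xs) \<ge> 1 - h
                    \<and> count_list xs 1 = 1} = card (hook_data h n)"
    unfolding single_one_partitions_eq_image
    by (rule card_image, rule inj_on_subset[OF inj_on_single_one_partition]) (auto simp: hook_data_def)
  moreover have "hook_data h n = {}" if "int n - h < 0"
    using that by (auto simp: hook_data_def)
  ultimately show ?thesis
    by simp
qed

end
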